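(* Let $R$ be a Noetherian ring of prime characteristic $p>0$, let $N\in\mathbb{N}$, and let $\{I_n\}_{n\in\mathbb{N}}$ be a collection of ideals of $R$ each generated by $N$ elements. Let $\mathcal{F}$ be a non-principal ultrafilter on $\mathbb{N}$. Then, as ideals of the ultrapower $R_\natural$, \[ \Big(\operatorname{ulim}_{n\to\mathcal{F}} I_n\Big)^F\subseteq \operatorname{ulim}_{n\to\mathcal{F}}\big(I_n^F\big). \]
   Context: A non-principal ultrafilter $\mathcal{F}$ on $\mathbb{N}$ is a collection of subsets of $\mathbb{N}$ not containing $\varnothing$, closed under supersets and finite intersections, containing $A$ or $\mathbb{N}\setminus A$ for every $A\subseteq\mathbb{N}$, and containing no finite set. The ultrapower $R_\natural$ is $\prod_{n\in\mathbb{N}}R$ modulo the relation $(a_n)\sim(b_n)$ iff $\{n\mid a_n=b_n\}\in\mathcal{F}$, with componentwise ring operations; the class of $(a_n)$ is written $\operatorname{ulim} a_n$. For ideals $I_n\subseteq R$, $\operatorname{ulim}_{n\to\mathcal{F}} I_n$ is the ideal of $R_\natural$ consisting of classes $\operatorname{ulim} a_n$ with $\{n\mid a_n\in I_n\}\in\mathcal{F}$. For an ideal $I$ of a ring $S$ of characteristic $p$, $I^{[p^e]}$ is the ideal generated by $\{r^{p^e}\mid r\in I\}$, and the Frobenius closure is $I^F=\{r\in S\mid r^{p^e}\in I^{[p^e]}\text{ for all } e\gg0\}$. *)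

theory Defs
  imports "HOL-Algebra.Algebra"
begin

definition nonprincipal_ultrafilter :: "nat set set \<Rightarrow> bool" where
  "nonprincipal_ultrafilter F \<longleftrightarrow>
     {} \<notin> F \<and>
     (\<forall>A B. A \<in> F \<and> A \<subseteq> B \<longrightarrow> B \<in> F) \<and>
     (\<forall>A B. A \<in> F \<and> B \<in> F \<longrightarrow> A \<inter> B \<in> F) \<and>
     (\<forall>A. A \<in> F \<or> (UNIV - A) \<in> F) \<and>
     (\<forall>A. finite A \<longrightarrow> A \<notin> F)"

definition has_prime_char :: "('a, 'b) ring_scheme \<Rightarrow> nat \<Rightarrow> bool" where
  "has_prime_char R p \<longleftrightarrow> Factorial_Ring.prime p \<and> \<one>\<^bsub>R\<^esub> \<noteq> \<zero>\<^bsub>R\<^esub> \<and> [p] \<cdot>\<^bsub>R\<^esub> \<one>\<^bsub>R\<^esub> = \<zero>\<^bsub>R\<^esub>"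

definition useqs :: "('a, 'b) ring_scheme \<Rightarrow> (nat \<Rightarrow> 'a) set" where
  "useqs R = {a. \<forall>n. a n \<in> carrier R}"

definition uequiv :: "('a, 'b) ring_scheme \<Rightarrow> nat set set \<Rightarrow> ((nat \<Rightarrow> 'a) \<times> (nat \<Rightarrow> 'a)) set" where
  "uequiv R F = {(a, b). a \<in> useqs R \<and> b \<in> useqs R \<and> {n. a n = b n} \<in> F}"

definition ulim :: "('a, 'b) ring_scheme \<Rightarrow> nat set set \<Rightarrow> (nat \<Rightarrow> 'a) \<Rightarrow> (nat \<Rightarrow> 'a) set" where
  "ulim R F a = uequiv R F `` {a}"

definition urep :: "(nat \<Rightarrow> 'a) set \<Rightarrow> nat \<Rightarrow> 'a" where
  "urep S = (SOME x. x \<in> S)"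

definition ultrapower :: "('a, 'b) ring_scheme \<Rightarrow> nat set set \<Rightarrow> ((nat \<Rightarrow> 'a) set) ring" where
  "ultrapower R F =
     \<lparr>carrier = useqs R // uequiv R F,
      Group.monoid.mult = (\<lambda>U V. ulim R F (\<lambda>n. monoid.mult R (urep U n) (urep V n))),
      Group.monoid.one = ulim R F (\<lambda>n. monoid.one R),
      Ring.ring.zero = ulim R F (\<lambda>n. ring.zero R),
      Ring.ring.add = (\<lambda>U V. ulim R F (\<lambda>n. ring.add R (urep U n) (urep V n)))\<rparr>"

definition ulim_ideal :: "('a, 'b) ring_scheme \<Rightarrow> nat set set \<Rightarrow> (nat \<Rightarrow> 'a set) \<Rightarrow> (nat \<Rightarrow> 'a) set set" where
  "ulim_ideal R F I =
     {C \<in> carrier (ultrapower R F). \<exists>a \<in> C. {n. a n \<in> I n} \<in> F}"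

definition frob_power :: "('a, 'b) ring_scheme \<Rightarrow> 'a set \<Rightarrow> nat \<Rightarrow> 'a set" where
  "frob_power S I q = Idl\<^bsub>S\<^esub> ((\<lambda>r. r [^]\<^bsub>S\<^esub> q) ` I)"

definition frob_closure :: "('a, 'b) ring_scheme \<Rightarrow> nat \<Rightarrow> 'a set \<Rightarrow> 'a set" where
  "frob_closure S p I =
     {r \<in> carrier S. \<exists>e0. \<forall>e\<ge>e0. r [^]\<^bsub>S\<^esub> (p ^ e) \<in> frob_power S I (p ^ e)}"

end

theory Submission
  imports Defs
begin

(*
  Write r = ulim a and suppose that r^q lies in the q-th Frobenius power of ulim I_n, where
  q = p^e. The ultralimit of the ideals I_n^[q] is an ideal of the ultrapower containing the
  q-th powers of all elements of ulim I_n, so a_n^q lies in I_n^[q] for F-many n. In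
  characteristic p the Frobenius map is additive, hence x in Idl S gives x^p in Idl (S^p);
  iterating, a_n^(p^e') lies in I_n^[p^e'] for every e' >= e, i.e. a_n lies in the Frobenius
  closure of I_n.
*)

lemma (in abelian_monoid) finsum_choose_Suc:
  assumes f: "f \<in> {..Suc n} \<rightarrow> carrier G"
  shows "(\<Oplus>k\<in>{..Suc n}. add_pow G (Suc n choose k) (f k))
       = (\<Oplus>k\<in>{..n}. add_pow G (n choose k) (f (Suc k)))
         \<oplus> (\<Oplus>k\<in>{..n}. add_pow G (n choose k) (f k))"
proof -
  have fk: "\<And>k. k \<le> Suc n \<Longrightarrow> f k \<in> carrier G" using f by auto
  have low: "(\<Oplus>k\<in>{..n}. add_pow G (n choose k) (f k))
           = (\<Oplus>k\<in>{..n}. add_pow G (n choose Suc k) (f (Suc k))) \<oplus> f 0"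
  proof -
    have "(\<Oplus>k\<in>{..n}. add_pow G (n choose k) (f k))
        = (\<Oplus>k\<in>{..Suc n}. add_pow G (n choose k) (f k))"
      using fk by (simp add: Pi_def binomial_eq_0)
    also have "\<dots> = (\<Oplus>k\<in>{..n}. add_pow G (n choose Suc k) (f (Suc k)))
                      \<oplus> add_pow G (n choose 0) (f 0)"
      by (rule finsum_Suc2) (use fk in auto)
    finally show ?thesis using fk by simp
  qed
  have "(\<Oplus>k\<in>{..Suc n}. add_pow G (Suc n choose k) (f k))
      = (\<Oplus>k\<in>{..n}. add_pow G (Suc n choose Suc k) (f (Suc k)))
        \<oplus> add_pow G (Suc n choose 0) (f 0)"
    by (rule finsum_Suc2) (use fk in auto)
  also have "(\<Oplus>k\<in>{..n}. add_pow G (Suc n choose Suc k) (f (Suc k)))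
      = (\<Oplus>k\<in>{..n}. add_pow G (n choose k) (f (Suc k)))
        \<oplus> (\<Oplus>k\<in>{..n}. add_pow G (n choose Suc k) (f (Suc k)))"
  proof -
    have "(\<Oplus>k\<in>{..n}. add_pow G (Suc n choose Suc k) (f (Suc k)))
        = (\<Oplus>k\<in>{..n}. add_pow G (n choose k) (f (Suc k))
                             \<oplus> add_pow G (n choose Suc k) (f (Suc k)))"
      using fk by (intro finsum_cong) (auto simp: add.nat_pow_mult)
    also have "\<dots> = (\<Oplus>k\<in>{..n}. add_pow G (n choose k) (f (Suc k)))
                      \<oplus> (\<Oplus>k\<in>{..n}. add_pow G (n choose Suc k) (f (Suc k)))"
      using fk by (intro finsum_addf) auto
    finally show ?thesis .
  qed
  finally show ?thesis using fk by (simp add: low a_assoc Pi_def)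
qed

lemma (in cring) binomial_expansion:
  assumes x: "x \<in> carrier R" and y: "y \<in> carrier R"
  shows "(x \<oplus> y) [^] n = (\<Oplus>k\<in>{..n}. add_pow R (n choose k) (x [^] k \<otimes> y [^] (n - k)))"
proof (induction n)
  case 0
  then show ?case using x y by simp
next
  case (Suc n)
  define f where "f k = x [^] k \<otimes> y [^] (Suc n - k)" for k
  have f: "f \<in> {..Suc n} \<rightarrow> carrier R" using x y by (simp add: f_def)
  have "(x \<oplus> y) [^] Suc n = x \<otimes> (x \<oplus> y) [^] n \<oplus> y \<otimes> (x \<oplus> y) [^] n"
    using x y by (simp add: l_distr m_comm)
  also have "x \<otimes> (x \<oplus> y) [^] n = (\<Oplus>k\<in>{..n}. add_pow R (n choose k) (f (Suc k)))"
    using x y by (simp add: Suc finsum_rdistr Pi_def add_pow_rdistr f_def m_assoc m_lcomm)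
  also have "y \<otimes> (x \<oplus> y) [^] n = (\<Oplus>k\<in>{..n}. add_pow R (n choose k) (f k))"
    using x y by (auto simp: Suc finsum_rdistr Pi_def add_pow_rdistr f_def m_ac Suc_diff_le
                     intro!: finsum_cong)
  finally show ?case using finsum_choose_Suc[OF f] by (simp add: f_def)
qed

lemma (in ring) add_pow_char_dvd_eq_zero:
  fixes p c :: nat
  assumes char: "add_pow R p \<one> = \<zero>" and z: "z \<in> carrier R" and "p dvd c"
  shows "add_pow R c z = \<zero>"
proof -
  obtain m where c: "c = p * m" using \<open>p dvd c\<close> by blast
  have "add_pow R p z = add_pow R p \<one> \<otimes> z" using z by (simp add: add_pow_ldistr)
  then have "add_pow R p z = \<zero>" using char z by simp
  then show ?thesis using z by (simp add: c add.nat_pow_pow[symmetric])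
qed

lemma (in cring) frobenius_add:
  assumes pchar: "has_prime_char R p"
    and x: "x \<in> carrier R" and y: "y \<in> carrier R"
  shows "(x \<oplus> y) [^] p = x [^] p \<oplus> y [^] p"
proof -
  have p: "Factorial_Ring.prime p" and char: "add_pow R p \<one> = \<zero>"
    using pchar by (simp_all add: has_prime_char_def)
  define f where "f k = add_pow R (p choose k) (x [^] k \<otimes> y [^] (p - k))" for k
  have f: "f \<in> {..n} \<rightarrow> carrier R" for n using x y by (simp add: f_def)
  obtain m where m: "p = Suc (Suc m)"
    using prime_ge_2_nat[OF p] by (metis add_2_eq_Suc le_Suc_ex)
  have middle: "f (Suc k) = \<zero>" if "k \<le> m" for k
  proof -
    have "p dvd (p choose Suc k)" using p that m by (intro dvd_choose_prime) auto
    then show ?thesis unfolding f_def using x y by (intro add_pow_char_dvd_eq_zero[OF char]) auto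
  qed
  have "(x \<oplus> y) [^] p = finsum R f {..Suc (Suc m)}"
    unfolding f_def m[symmetric] by (rule binomial_expansion[OF x y])
  also have "\<dots> = f (Suc (Suc m)) \<oplus> finsum R f {..Suc m}" by (rule finsum_Suc[OF f])
  also have "finsum R f {..Suc m} = (\<Oplus>k\<in>{..m}. f (Suc k)) \<oplus> f 0" by (rule finsum_Suc2[OF f])
  also have "(\<Oplus>k\<in>{..m}. f (Suc k)) = \<zero>"
    using middle by (simp cong: finsum_cong)
  finally show ?thesis using x y m by (simp add: f_def a_comm)
qed

lemma (in cring) ideal_frobenius_preimage:
  assumes pchar: "has_prime_char R p" and J: "ideal J R"
  shows "ideal {z \<in> carrier R. z [^] p \<in> J} R" (is "ideal ?A R")
proof -
  interpret J: ideal J R by (rule J)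
  have mult: "x \<otimes> a \<in> ?A" if "a \<in> ?A" "x \<in> carrier R" for a x
    using that J.I_l_closed by (simp add: pow_mult_distrib m_comm)
  show ?thesis
  proof (rule idealI)
    show "subgroup ?A (add_monoid R)"
    proof (rule add.subgroupI)
      have "\<zero> [^] p = \<zero>" using pchar prime_gt_0_nat by (simp add: has_prime_char_def nat_pow_zero)
      then show "?A \<noteq> {}" using J.zero_closed by auto
      fix a assume a: "a \<in> ?A"
      then have "\<ominus> a = \<ominus> \<one> \<otimes> a" by (simp add: l_minus)
      then show "\<ominus> a \<in> ?A" using mult[OF a] by simp
    next
      fix a b assume "a \<in> ?A" "b \<in> ?A"
      then show "a \<oplus> b \<in> ?A" using J.a_closed by (simp add: frobenius_add[OF pchar])
    qed auto
  qed (use mult ring_axioms in \<open>auto simp: m_comm\<close>)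
qed

lemma (in cring) pow_char_mem_frob_power:
  assumes pchar: "has_prime_char R p"
    and S: "S \<subseteq> carrier R" and x: "x \<in> Idl S"
  shows "x [^] p \<in> frob_power R S p"
proof -
  let ?J = "frob_power R S p"
  have "ideal ?J R" unfolding frob_power_def using S by (intro genideal_ideal) auto
  then have "ideal {z \<in> carrier R. z [^] p \<in> ?J} R" by (rule ideal_frobenius_preimage[OF pchar])
  moreover have "S \<subseteq> {z \<in> carrier R. z [^] p \<in> ?J}"
    using S genideal_self[of "(\<lambda>s. s [^] p) ` S"] by (auto simp: frob_power_def)
  ultimately have "Idl S \<subseteq> {z \<in> carrier R. z [^] p \<in> ?J}" by (rule genideal_minimal)
  then show ?thesis using x by blast
qed

lemma (in cring) frob_closureI:
  assumes pchar: "has_prime_char R p" and S: "S \<subseteq> carrier R"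
    and x: "x \<in> carrier R" and xS: "x [^] (p ^ e) \<in> frob_power R S (p ^ e)"
  shows "x \<in> frob_closure R p S"
proof -
  have "x [^] (p ^ (e + k)) \<in> frob_power R S (p ^ (e + k))" for k
  proof (induction k)
    case 0
    then show ?case using xS by simp
  next
    case (Suc k)
    let ?q = "p ^ (e + k)"
    have Sq: "(\<lambda>s. s [^] ?q) ` S \<subseteq> carrier R" using S by auto
    have "(x [^] ?q) [^] p \<in> frob_power R ((\<lambda>s. s [^] ?q) ` S) p"
      using Suc by (intro pow_char_mem_frob_power[OF pchar Sq]) (simp add: frob_power_def)
    moreover have "(\<lambda>s. s [^] p) ` (\<lambda>s. s [^] ?q) ` S = (\<lambda>s. s [^] (p ^ (e + Suc k))) ` S"
      unfolding image_image using S by (intro image_cong) (auto simp: nat_pow_pow mult.commute)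
    ultimately show ?case
      using x by (simp add: frob_power_def nat_pow_pow mult.commute)
  qed
  then show ?thesis using x by (auto simp: frob_closure_def intro!: exI[of _ e] dest!: le_Suc_ex)
qed

locale reduced_power = ring R for R (structure) +
  fixes F :: "nat set set"
  assumes UNIV_in_F: "UNIV \<in> F"
    and F_Int: "A \<in> F \<Longrightarrow> B \<in> F \<Longrightarrow> A \<inter> B \<in> F"
    and F_mono: "A \<in> F \<Longrightarrow> A \<subseteq> B \<Longrightarrow> B \<in> F"
begin

abbreviation "U \<equiv> ultrapower R F"
abbreviation "cl \<equiv> ulim R F"

lemma F_Int_mono: "A \<in> F \<Longrightarrow> B \<in> F \<Longrightarrow> A \<inter> B \<subseteq> C \<Longrightarrow> C \<in> F"
  using F_Int F_mono by blast

lemma useqs_iff [simp]: "a \<in> useqs R \<longleftrightarrow> (\<forall>n. a n \<in> carrier R)"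
  by (simp add: useqs_def)

lemma mem_ulim_iff: "b \<in> cl a \<longleftrightarrow> a \<in> useqs R \<and> b \<in> useqs R \<and> {n. a n = b n} \<in> F"
  by (simp add: ulim_def uequiv_def)

lemma mem_ulim_self: "a \<in> useqs R \<Longrightarrow> a \<in> cl a"
  using UNIV_in_F by (simp add: mem_ulim_iff)

lemma ulim_eq_iff:
  assumes "a \<in> useqs R" "b \<in> useqs R"
  shows "cl a = cl b \<longleftrightarrow> {n. a n = b n} \<in> F"
proof
  assume "cl a = cl b"
  then have "b \<in> cl a" using mem_ulim_self[OF assms(2)] by simp
  then show "{n. a n = b n} \<in> F" by (simp add: mem_ulim_iff)
next
  assume ab: "{n. a n = b n} \<in> F"
  have "{n. a n = c n} \<in> F \<longleftrightarrow> {n. b n = c n} \<in> F" for c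
    by (auto intro: F_Int_mono[OF ab])
  then show "cl a = cl b" using assms by (auto simp: mem_ulim_iff)
qed

lemma carrier_ultrapower: "carrier U = cl ` useqs R"
  by (auto simp: ultrapower_def quotient_def ulim_def)

lemma ultrapower_carrierE:
  assumes "C \<in> carrier U" obtains a where "a \<in> useqs R" "C = cl a"
  using assms carrier_ultrapower by auto

lemma ulim_in_carrier [simp]: "a \<in> useqs R \<Longrightarrow> cl a \<in> carrier U"
  by (simp add: carrier_ultrapower)

lemma urep_ulim:
  assumes "a \<in> useqs R"
  shows "urep (cl a) \<in> useqs R" "{n. a n = urep (cl a) n} \<in> F"
proof -
  have "urep (cl a) \<in> cl a"
    unfolding urep_def using mem_ulim_self[OF assms] by (rule someI[where P = "\<lambda>x. x \<in> cl a"])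
  then show "urep (cl a) \<in> useqs R" "{n. a n = urep (cl a) n} \<in> F"
    by (simp_all add: mem_ulim_iff)
qed

lemma ulim_urep_componentwise:
  assumes "a \<in> useqs R" "b \<in> useqs R"
    and op: "\<And>x y. x \<in> carrier R \<Longrightarrow> y \<in> carrier R \<Longrightarrow> op x y \<in> carrier R"
  shows "cl (\<lambda>n. op (urep (cl a) n) (urep (cl b) n)) = cl (\<lambda>n. op (a n) (b n))"
proof -
  have "{n. op (urep (cl a) n) (urep (cl b) n) = op (a n) (b n)} \<in> F"
    by (rule F_Int_mono[OF urep_ulim(2)[OF assms(1)] urep_ulim(2)[OF assms(2)]]) auto
  then show ?thesis
    using urep_ulim[OF assms(1)] urep_ulim[OF assms(2)] assms op by (subst ulim_eq_iff) auto
qed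

lemma ultrapower_mult:
  "a \<in> useqs R \<Longrightarrow> b \<in> useqs R \<Longrightarrow> cl a \<otimes>\<^bsub>U\<^esub> cl b = cl (\<lambda>n. a n \<otimes> b n)"
  using ulim_urep_componentwise[of a b "(\<otimes>)"] by (simp add: ultrapower_def)

lemma ultrapower_add:
  "a \<in> useqs R \<Longrightarrow> b \<in> useqs R \<Longrightarrow> cl a \<oplus>\<^bsub>U\<^esub> cl b = cl (\<lambda>n. a n \<oplus> b n)"
  using ulim_urep_componentwise[of a b "(\<oplus>)"] by (simp add: ultrapower_def)

lemma ultrapower_one: "\<one>\<^bsub>U\<^esub> = cl (\<lambda>n. \<one>)"
  by (simp add: ultrapower_def)

lemma ultrapower_zero: "\<zero>\<^bsub>U\<^esub> = cl (\<lambda>n. \<zero>)"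
  by (simp add: ultrapower_def)

lemmas ultrapower_simps = ultrapower_mult ultrapower_add ultrapower_one ultrapower_zero

lemma abelian_group_ultrapower: "abelian_group U"
proof (rule abelian_groupI)
  fix x y z assume "x \<in> carrier U" "y \<in> carrier U" "z \<in> carrier U"
  then obtain a b c where "a \<in> useqs R" "b \<in> useqs R" "c \<in> useqs R" "x = cl a" "y = cl b" "z = cl c"
    by (metis ultrapower_carrierE)
  then show "x \<oplus>\<^bsub>U\<^esub> y \<oplus>\<^bsub>U\<^esub> z = x \<oplus>\<^bsub>U\<^esub> (y \<oplus>\<^bsub>U\<^esub> z)"
    by (simp add: ultrapower_simps a_assoc)
next
  fix x y assume "x \<in> carrier U" "y \<in> carrier U"
  then obtain a b where "a \<in> useqs R" "b \<in> useqs R" "x = cl a" "y = cl b"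
    by (metis ultrapower_carrierE)
  then show "x \<oplus>\<^bsub>U\<^esub> y \<in> carrier U" "x \<oplus>\<^bsub>U\<^esub> y = y \<oplus>\<^bsub>U\<^esub> x"
    by (simp_all add: ultrapower_simps a_comm)
next
  fix x assume "x \<in> carrier U"
  then obtain a where a: "a \<in> useqs R" "x = cl a" by (rule ultrapower_carrierE)
  then show "\<zero>\<^bsub>U\<^esub> \<oplus>\<^bsub>U\<^esub> x = x" by (simp add: ultrapower_simps)
  have "cl (\<lambda>n. \<ominus> a n) \<oplus>\<^bsub>U\<^esub> x = \<zero>\<^bsub>U\<^esub>" using a by (simp add: ultrapower_simps l_neg)
  then show "\<exists>y\<in>carrier U. y \<oplus>\<^bsub>U\<^esub> x = \<zero>\<^bsub>U\<^esub>" using a by (intro bexI) auto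
qed (simp add: ultrapower_zero)

lemma monoid_ultrapower: "monoid U"
proof (rule monoidI)
  fix x y z assume "x \<in> carrier U" "y \<in> carrier U" "z \<in> carrier U"
  then obtain a b c where "a \<in> useqs R" "b \<in> useqs R" "c \<in> useqs R" "x = cl a" "y = cl b" "z = cl c"
    by (metis ultrapower_carrierE)
  then show "x \<otimes>\<^bsub>U\<^esub> y \<otimes>\<^bsub>U\<^esub> z = x \<otimes>\<^bsub>U\<^esub> (y \<otimes>\<^bsub>U\<^esub> z)"
    by (simp add: ultrapower_simps m_assoc)
next
  fix x y assume "x \<in> carrier U" "y \<in> carrier U"
  then obtain a b where "a \<in> useqs R" "b \<in> useqs R" "x = cl a" "y = cl b"
    by (metis ultrapower_carrierE)
  then show "x \<otimes>\<^bsub>U\<^esub> y \<in> carrier U" by (simp add: ultrapower_simps)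
next
  fix x assume "x \<in> carrier U"
  then obtain a where "a \<in> useqs R" "x = cl a" by (rule ultrapower_carrierE)
  then show "\<one>\<^bsub>U\<^esub> \<otimes>\<^bsub>U\<^esub> x = x" "x \<otimes>\<^bsub>U\<^esub> \<one>\<^bsub>U\<^esub> = x"
    by (simp_all add: ultrapower_simps)
qed (simp add: ultrapower_one)

lemma ring_ultrapower: "ring U"
proof (rule ringI[OF abelian_group_ultrapower monoid_ultrapower])
  fix x y z assume "x \<in> carrier U" "y \<in> carrier U" "z \<in> carrier U"
  then obtain a b c where "a \<in> useqs R" "b \<in> useqs R" "c \<in> useqs R" "x = cl a" "y = cl b" "z = cl c"
    by (metis ultrapower_carrierE)
  then show "(x \<oplus>\<^bsub>U\<^esub> y) \<otimes>\<^bsub>U\<^esub> z = x \<otimes>\<^bsub>U\<^esub> z \<oplus>\<^bsub>U\<^esub> y \<otimes>\<^bsub>U\<^esub> z"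
    "z \<otimes>\<^bsub>U\<^esub> (x \<oplus>\<^bsub>U\<^esub> y) = z \<otimes>\<^bsub>U\<^esub> x \<oplus>\<^bsub>U\<^esub> z \<otimes>\<^bsub>U\<^esub> y"
    by (simp_all add: ultrapower_simps l_distr r_distr)
qed

lemma ultrapower_pow: "a \<in> useqs R \<Longrightarrow> cl a [^]\<^bsub>U\<^esub> (k::nat) = cl (\<lambda>n. a n [^] k)"
  by (induction k) (simp_all add: ultrapower_simps)

lemma ulim_mem_ulim_ideal_iff:
  assumes "a \<in> useqs R"
  shows "cl a \<in> ulim_ideal R F J \<longleftrightarrow> {n. a n \<in> J n} \<in> F"
proof
  assume "cl a \<in> ulim_ideal R F J"
  then obtain b where "{n. a n = b n} \<in> F" "{n. b n \<in> J n} \<in> F"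
    by (auto simp: ulim_ideal_def mem_ulim_iff)
  then show "{n. a n \<in> J n} \<in> F" by (rule F_Int_mono) auto
qed (use assms mem_ulim_self[OF assms] in \<open>auto simp: ulim_ideal_def\<close>)

lemma ulim_idealE:
  assumes "C \<in> ulim_ideal R F J"
  obtains a where "a \<in> useqs R" "C = cl a" "{n. a n \<in> J n} \<in> F"
proof -
  obtain a where a: "a \<in> useqs R" "C = cl a"
    using assms by (auto simp: ulim_ideal_def elim: ultrapower_carrierE)
  then show ?thesis using that assms ulim_mem_ulim_ideal_iff by blast
qed

lemma ideal_ulim_ideal:
  assumes J: "\<And>n. ideal (J n) R"
  shows "ideal (ulim_ideal R F J) U"
proof -
  interpret U: ring U by (rule ring_ultrapower)
  have mult: "x \<otimes>\<^bsub>U\<^esub> C \<in> ulim_ideal R F J \<and> C \<otimes>\<^bsub>U\<^esub> x \<in> ulim_ideal R F J"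
    if C: "C \<in> ulim_ideal R F J" and x: "x \<in> carrier U" for C x
  proof -
    obtain a where a: "a \<in> useqs R" "C = cl a" "{n. a n \<in> J n} \<in> F"
      using C by (rule ulim_idealE)
    obtain b where b: "b \<in> useqs R" "x = cl b" using x by (rule ultrapower_carrierE)
    have "{n. b n \<otimes> a n \<in> J n \<and> a n \<otimes> b n \<in> J n} \<in> F"
      using a(3) by (rule F_mono) (use b(1) ideal.I_l_closed[OF J] ideal.I_r_closed[OF J] in auto)
    then show ?thesis using a b by (auto simp: ultrapower_mult ulim_mem_ulim_ideal_iff elim: F_mono)
  qed
  have "subgroup (ulim_ideal R F J) (add_monoid U)"
  proof (rule U.add.subgroupI)
    have "cl (\<lambda>n. \<zero>) \<in> ulim_ideal R F J"
      using UNIV_in_F ideal.Icarr[OF J] additive_subgroup.zero_closed[OF ideal.axioms(1)[OF J]]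
      by (simp add: ulim_mem_ulim_ideal_iff)
    then show "ulim_ideal R F J \<noteq> {}" by blast
  next
    fix C assume C: "C \<in> ulim_ideal R F J"
    then have "\<ominus>\<^bsub>U\<^esub> C = (\<ominus>\<^bsub>U\<^esub> \<one>\<^bsub>U\<^esub>) \<otimes>\<^bsub>U\<^esub> C"
      by (simp add: U.l_minus ulim_ideal_def)
    then show "\<ominus>\<^bsub>U\<^esub> C \<in> ulim_ideal R F J" using mult[OF C] by simp
  next
    fix C D assume C: "C \<in> ulim_ideal R F J" and D: "D \<in> ulim_ideal R F J"
    obtain a where a: "a \<in> useqs R" "C = cl a" "{n. a n \<in> J n} \<in> F" using C by (rule ulim_idealE)
    obtain b where b: "b \<in> useqs R" "D = cl b" "{n. b n \<in> J n} \<in> F" using D by (rule ulim_idealE)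
    have "{n. a n \<oplus> b n \<in> J n} \<in> F"
      using a(3) b(3) by (rule F_Int_mono)
        (use additive_subgroup.a_closed[OF ideal.axioms(1)[OF J]] in auto)
    then show "C \<oplus>\<^bsub>U\<^esub> D \<in> ulim_ideal R F J"
      using a b by (simp add: ultrapower_add ulim_mem_ulim_ideal_iff)
  qed (auto simp: ulim_ideal_def)
  then show ?thesis by (rule idealI[OF ring_ultrapower]) (use mult in auto)
qed

lemma frob_power_ulim_ideal_subset:
  assumes I: "\<And>n. I n \<subseteq> carrier R"
  shows "frob_power U (ulim_ideal R F I) q \<subseteq> ulim_ideal R F (\<lambda>n. frob_power R (I n) q)"
  unfolding frob_power_def
proof (rule ring.genideal_minimal[OF ring_ultrapower])
  show "ideal (ulim_ideal R F (\<lambda>n. Idl ((\<lambda>r. r [^] q) ` I n))) U"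
    using I by (intro ideal_ulim_ideal genideal_ideal) auto
  show "(\<lambda>C. C [^]\<^bsub>U\<^esub> q) ` ulim_ideal R F I
          \<subseteq> ulim_ideal R F (\<lambda>n. Idl ((\<lambda>r. r [^] q) ` I n))"
  proof clarify
    fix C assume "C \<in> ulim_ideal R F I"
    then obtain a where a: "a \<in> useqs R" "C = cl a" "{n. a n \<in> I n} \<in> F" by (rule ulim_idealE)
    have "a n [^] q \<in> Idl ((\<lambda>r. r [^] q) ` I n)" if "a n \<in> I n" for n
      by (rule subsetD[OF genideal_self]) (use I that in auto)
    then have "{n. a n \<in> I n} \<subseteq> {n. a n [^] q \<in> Idl ((\<lambda>r. r [^] q) ` I n)}"
      by blast
    then show "C [^]\<^bsub>U\<^esub> q \<in> ulim_ideal R F (\<lambda>n. Idl ((\<lambda>r. r [^] q) ` I n))"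
      using a by (simp add: ultrapower_pow ulim_mem_ulim_ideal_iff F_mono)
  qed
qed

lemma frob_closure_ulim_ideal_subset:
  assumes "cring R" and pchar: "has_prime_char R p" and I: "\<And>n. I n \<subseteq> carrier R"
  shows "frob_closure U p (ulim_ideal R F I) \<subseteq> ulim_ideal R F (\<lambda>n. frob_closure R p (I n))"
proof
  interpret cring R by fact
  fix C assume C: "C \<in> frob_closure U p (ulim_ideal R F I)"
  then obtain a where a: "a \<in> useqs R" "C = cl a"
    by (auto simp: frob_closure_def elim: ultrapower_carrierE)
  from C obtain e where "C [^]\<^bsub>U\<^esub> p ^ e \<in> frob_power U (ulim_ideal R F I) (p ^ e)"
    by (auto simp: frob_closure_def)
  then have "C [^]\<^bsub>U\<^esub> p ^ e \<in> ulim_ideal R F (\<lambda>n. frob_power R (I n) (p ^ e))"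
    using frob_power_ulim_ideal_subset[of I, OF I] by blast
  then have "{n. a n [^] p ^ e \<in> frob_power R (I n) (p ^ e)} \<in> F"
    using a by (simp add: ultrapower_pow ulim_mem_ulim_ideal_iff)
  moreover have "{n. a n [^] p ^ e \<in> frob_power R (I n) (p ^ e)}
                 \<subseteq> {n. a n \<in> frob_closure R p (I n)}"
  proof clarify
    fix n assume "a n [^] p ^ e \<in> frob_power R (I n) (p ^ e)"
    then show "a n \<in> frob_closure R p (I n)" using a(1) by (intro frob_closureI[OF pchar I]) auto
  qed
  ultimately show "C \<in> ulim_ideal R F (\<lambda>n. frob_closure R p (I n))"
    using a by (simp add: ulim_mem_ulim_ideal_iff F_mono)
qed

end

lemma (in ring) reduced_power_nonprincipal_ultrafilter:
  assumes "nonprincipal_ultrafilter F"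
  shows "reduced_power R F"
proof
  have "{} \<notin> F" and "UNIV \<in> F \<or> UNIV - UNIV \<in> F"
    using assms unfolding nonprincipal_ultrafilter_def by blast+
  then show "UNIV \<in> F" by simp
qed (use assms in \<open>unfold nonprincipal_ultrafilter_def, blast+\<close>)

theorem lemma4p3:
  fixes R :: "('a, 'b) ring_scheme" and p N :: nat
    and I :: "nat \<Rightarrow> 'a set" and F :: "nat set set"
  assumes "cring R" and "noetherian_ring R"
    and "has_prime_char R p"
    and "\<And>n. \<exists>gs. length gs = N \<and> set gs \<subseteq> carrier R \<and> I n = Idl\<^bsub>R\<^esub> (set gs)"
    and "nonprincipal_ultrafilter F"
  shows "frob_closure (ultrapower R F) p (ulim_ideal R F I)
           \<subseteq> ulim_ideal R F (\<lambda>n. frob_closure R p (I n))"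
proof -
  interpret cring R by fact
  interpret reduced_power R F by (rule reduced_power_nonprincipal_ultrafilter) fact
  have "I n \<subseteq> carrier R" for n
  proof -
    from assms(4)[of n] obtain gs where "set gs \<subseteq> carrier R" "I n = Idl\<^bsub>R\<^esub> (set gs)"
      by (elim exE conjE)
    then have "ideal (I n) R" by (simp add: genideal_ideal)
    then show ?thesis by (auto dest: ideal.Icarr)
  qed
  then show ?thesis by (rule frob_closure_ulim_ideal_subset[OF assms(1,3)])
qed

end
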